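(* Let $k\ge 2$ and let $H$ be a $(k-2)$-regular graph. Then for every positive integer $n$, $\mathrm{ex}(n,H,S_k)=\lfloor n/|V(H)|\rfloor$.
   Context: $S_k$ is the star on $k$ vertices (a center joined to $k-1$ leaves). For graphs $H,G$, $\mathcal{N}(H,G)$ is the number of subgraphs of $G$ isomorphic to $H$, and $\mathrm{ex}(n,H,F)$ is the maximum of $\mathcal{N}(H,G)$ over $F$-free graphs $G$ on $n$ vertices. *)

theory Defs
  imports Main
begin

definition is_graph :: "'a set \<Rightarrow> 'a set set \<Rightarrow> bool" where
  "is_graph V E \<longleftrightarrow> finite V \<and> (\<forall>e\<in>E. e \<subseteq> V \<and> card e = 2)"

definition degree :: "'a set \<Rightarrow> 'a set set \<Rightarrow> 'a \<Rightarrow> nat" where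
  "degree V E v = card {u\<in>V. {u, v} \<in> E}"

definition regular :: "nat \<Rightarrow> 'a set \<Rightarrow> 'a set set \<Rightarrow> bool" where
  "regular d V E \<longleftrightarrow> (\<forall>v\<in>V. degree V E v = d)"

definition connected_graph :: "'a set \<Rightarrow> 'a set set \<Rightarrow> bool" where
  "connected_graph V E \<longleftrightarrow> V \<noteq> {} \<and>
     (\<forall>u\<in>V. \<forall>v\<in>V. (\<lambda>x y. {x, y} \<in> E)\<^sup>*\<^sup>* u v)"

definition graph_iso :: "'a set \<Rightarrow> 'a set set \<Rightarrow> 'b set \<Rightarrow> 'b set set \<Rightarrow> bool" where
  "graph_iso V1 E1 V2 E2 \<longleftrightarrow> (\<exists>f. bij_betw f V1 V2 \<and>
     (\<forall>x\<in>V1. \<forall>y\<in>V1. {x, y} \<in> E1 \<longleftrightarrow> {f x, f y} \<in> E2))"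

definition count_copies :: "'a set \<Rightarrow> 'a set set \<Rightarrow> 'b set \<Rightarrow> 'b set set \<Rightarrow> nat" where
  "count_copies VH EH VG EG = card {(V', E'). V' \<subseteq> VG \<and> E' \<subseteq> EG \<and> is_graph V' E' \<and>
       graph_iso VH EH V' E'}"

definition F_free :: "'a set \<Rightarrow> 'a set set \<Rightarrow> 'b set \<Rightarrow> 'b set set \<Rightarrow> bool" where
  "F_free VF EF VG EG \<longleftrightarrow> count_copies VF EF VG EG = 0"

definition ex_gen :: "nat \<Rightarrow> 'a set \<Rightarrow> 'a set set \<Rightarrow> 'b set \<Rightarrow> 'b set set \<Rightarrow> nat" where
  "ex_gen n VH EH VF EF = Max {count_copies VH EH {0..<n} E | E.
       is_graph {0..<n} E \<and> F_free VF EF {0..<n} E}"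

definition star_V :: "nat \<Rightarrow> nat set" where "star_V k = {0..<k}"
definition star_E :: "nat \<Rightarrow> nat set set" where "star_E k = {{0, i} | i. 1 \<le> i \<and> i < k}"

end

theory Submission
  imports Defs "HOL-Library.Disjoint_Sets"
begin

(* An S_k-free graph is the same as a graph of maximum degree at most k - 2. In such a host
   graph, every vertex of a copy of the (k-2)-regular graph H already has its full degree
   inside the copy, so the copy is closed under adjacency; being connected, its vertex set is
   a connected component of the host. Distinct copies therefore have disjoint vertex sets,
   which bounds their number by n / |V(H)|. Conversely, floor(n / |V(H)|) vertex-disjoint
   copies of H form a graph of maximum degree k - 2. *)

section \<open>Neighbourhoods and graph isomorphisms\<close>

definition neighbours :: "'a set \<Rightarrow> 'a set set \<Rightarrow> 'a \<Rightarrow> 'a set" where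
  "neighbours V E v = {u\<in>V. {u, v} \<in> E}"

lemma degree_eq_card_neighbours: "degree V E v = card (neighbours V E v)"
  unfolding degree_def neighbours_def ..

lemma is_graph_finite_edges: "is_graph V E \<Longrightarrow> finite E"
  unfolding is_graph_def by (meson PowI finite_Pow_iff finite_subset subsetI)

lemma is_graph_edgeD:
  assumes "is_graph V E" and "{x, y} \<in> E"
  shows "x \<in> V" and "y \<in> V" and "x \<noteq> y"
  using assms unfolding is_graph_def by (auto simp: card_insert_if split: if_splits)

lemma is_graph_edge_doubleton:
  assumes "is_graph V E" and "e \<in> E"
  obtains x y where "e = {x, y}"
  using assms unfolding is_graph_def by (meson card_2_iff)

lemma finite_neighbours: "is_graph V E \<Longrightarrow> finite (neighbours V E v)"
  unfolding is_graph_def neighbours_def by simp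

lemma degree_mono:
  assumes "finite V" and "V' \<subseteq> V" and "E' \<subseteq> E"
  shows "degree V' E' v \<le> degree V E v"
  unfolding degree_eq_card_neighbours neighbours_def
  using assms by (intro card_mono) auto

lemma neighbours_subgraph_eq:
  assumes "finite V" and "V' \<subseteq> V" and "E' \<subseteq> E" and "degree V E v \<le> degree V' E' v"
  shows "neighbours V' E' v = neighbours V E v"
proof -
  have "neighbours V' E' v \<subseteq> neighbours V E v"
    using assms(2,3) unfolding neighbours_def by auto
  moreover have "finite (neighbours V E v)"
    using assms(1) unfolding neighbours_def by simp
  ultimately show ?thesis
    using assms(4) unfolding degree_eq_card_neighbours by (metis card_seteq)
qed

definition graph_isomorphism ::
    "('a \<Rightarrow> 'b) \<Rightarrow> 'a set \<Rightarrow> 'a set set \<Rightarrow> 'b set \<Rightarrow> 'b set set \<Rightarrow> bool" where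
  "graph_isomorphism f V1 E1 V2 E2 \<longleftrightarrow> bij_betw f V1 V2 \<and>
     (\<forall>x\<in>V1. \<forall>y\<in>V1. {x, y} \<in> E1 \<longleftrightarrow> {f x, f y} \<in> E2)"

lemma graph_iso_iff_graph_isomorphism:
  "graph_iso V1 E1 V2 E2 \<longleftrightarrow> (\<exists>f. graph_isomorphism f V1 E1 V2 E2)"
  unfolding graph_iso_def graph_isomorphism_def ..

lemma graph_isomorphism_neighbours:
  assumes f: "graph_isomorphism f V1 E1 V2 E2" and w: "w \<in> V1"
  shows "neighbours V2 E2 (f w) = f ` neighbours V1 E1 w"
proof -
  have "V2 = f ` V1" and "\<forall>x\<in>V1. {x, w} \<in> E1 \<longleftrightarrow> {f x, f w} \<in> E2"
    using f w unfolding graph_isomorphism_def bij_betw_def by auto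
  then show ?thesis unfolding neighbours_def by auto
qed

lemma graph_isomorphism_degree:
  assumes f: "graph_isomorphism f V1 E1 V2 E2" and w: "w \<in> V1"
  shows "degree V2 E2 (f w) = degree V1 E1 w"
proof -
  have "inj_on f (neighbours V1 E1 w)"
    using f unfolding graph_isomorphism_def bij_betw_def neighbours_def
    by (auto intro: inj_on_subset)
  then show ?thesis
    unfolding degree_eq_card_neighbours graph_isomorphism_neighbours[OF assms]
    by (rule card_image)
qed

lemma graph_isomorphism_connected_graph:
  assumes "is_graph V1 E1" and f: "graph_isomorphism f V1 E1 V2 E2"
    and "connected_graph V1 E1"
  shows "connected_graph V2 E2"
proof -
  have walk: "(\<lambda>x y. {x, y} \<in> E2)\<^sup>*\<^sup>* (f a) (f b)"
    if "(\<lambda>x y. {x, y} \<in> E1)\<^sup>*\<^sup>* a b" and "a \<in> V1" for a b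
    using that
  proof (induction rule: rtranclp_induct)
    case (step y z)
    then have "y \<in> V1" "z \<in> V1" "{y, z} \<in> E1"
      using is_graph_edgeD[OF assms(1)] by auto
    then have "{f y, f z} \<in> E2" using f unfolding graph_isomorphism_def by blast
    with step show ?case by (simp add: rtranclp.rtrancl_into_rtrancl)
  qed simp
  have "V2 = f ` V1" using f unfolding graph_isomorphism_def bij_betw_def by simp
  with assms(3) show ?thesis unfolding connected_graph_def by (auto intro: walk)
qed

definition copies :: "'a set \<Rightarrow> 'a set set \<Rightarrow> 'b set \<Rightarrow> 'b set set \<Rightarrow> ('b set \<times> 'b set set) set"
  where "copies VH EH VG EG = {(V', E'). V' \<subseteq> VG \<and> E' \<subseteq> EG \<and> is_graph V' E' \<and>
            graph_iso VH EH V' E'}"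

lemma count_copies_eq_card_copies: "count_copies VH EH VG EG = card (copies VH EH VG EG)"
  unfolding count_copies_def copies_def ..

lemma finite_copies:
  assumes "is_graph VG EG"
  shows "finite (copies VH EH VG EG)"
proof -
  have "finite (Pow VG \<times> Pow EG)"
    using assms is_graph_finite_edges[OF assms] unfolding is_graph_def by simp
  then show ?thesis unfolding copies_def by (rule finite_subset[rotated]) auto
qed

lemma F_free_iff_copies_empty:
  "is_graph VG EG \<Longrightarrow> F_free VF EF VG EG \<longleftrightarrow> copies VF EF VG EG = {}"
  unfolding F_free_def count_copies_eq_card_copies by (simp add: finite_copies)

section \<open>Star-free graphs\<close>

lemma star_E_iff:
  assumes "x < k" and "y < k"
  shows "{x, y} \<in> star_E k \<longleftrightarrow> x \<noteq> y \<and> (x = 0 \<or> y = 0)"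
  using assms unfolding star_E_def by (auto simp: doubleton_eq_iff)

lemma degree_star_center:
  assumes "k \<ge> 1"
  shows "degree (star_V k) (star_E k) 0 = k - 1"
proof -
  have "neighbours (star_V k) (star_E k) 0 = {1..<k}"
    using assms unfolding neighbours_def star_V_def by (auto simp: star_E_iff)
  then show ?thesis by (simp add: degree_eq_card_neighbours)
qed

lemma star_graph_isomorphism:
  assumes "finite S" and "card S = k - 1" and "v \<notin> S" and "k \<ge> 1"
  obtains f where
    "graph_isomorphism f (star_V k) (star_E k) (insert v S) ((\<lambda>u. {v, u}) ` S)"
proof -
  obtain b where "bij_betw b {1..card S} S"
    using ex_bij_betw_nat_finite_1[OF assms(1)] by blast
  moreover have "{1..card S} = {1..<k}" using assms(2,4) by auto
  moreover define f where "f = b(0 := v)"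
  ultimately have leaves: "bij_betw f {1..<k} S"
    by (auto intro: bij_betw_cong[THEN iffD1])
  then have "bij_betw f ({1..<k} \<union> {0}) (S \<union> {v})"
    using notIn_Un_bij_betw[of 0 "{1..<k}" f S] assms(3) by (simp add: f_def)
  moreover have "{1..<k} \<union> {0} = star_V k" using assms(4) unfolding star_V_def by auto
  ultimately have bij: "bij_betw f (star_V k) (insert v S)" by simp
  have "{x, y} \<in> star_E k \<longleftrightarrow> {f x, f y} \<in> (\<lambda>u. {v, u}) ` S"
    if "x \<in> star_V k" "y \<in> star_V k" for x y
  proof -
    have "f x = v \<longleftrightarrow> x = 0" "f y = v \<longleftrightarrow> y = 0"
      using leaves that assms(3) unfolding star_V_def
      by (auto simp: f_def dest: bij_betwE)
    moreover have "f x = f y \<longleftrightarrow> x = y"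
      using bij that by (auto simp: bij_betw_def inj_on_eq_iff)
    moreover have "f x \<in> insert v S" "f y \<in> insert v S"
      using bij that by (auto dest: bij_betwE)
    ultimately show ?thesis
      using that assms(3) unfolding star_V_def
      by (auto simp: star_E_iff doubleton_eq_iff)
  qed
  with bij show ?thesis by (intro that) (auto simp: graph_isomorphism_def)
qed

lemma star_copy_if_degree_ge:
  assumes G: "is_graph V E" and v: "v \<in> V" and k: "k \<ge> 1" and deg: "k - 1 \<le> degree V E v"
  shows "copies (star_V k) (star_E k) V E \<noteq> {}"
proof -
  obtain S where S: "S \<subseteq> neighbours V E v" "card S = k - 1" "finite S"
    using deg unfolding degree_eq_card_neighbours by (meson obtain_subset_with_card_n)
  have "v \<notin> S" using S(1) is_graph_edgeD(3)[OF G] unfolding neighbours_def by blast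
  then obtain f where
    "graph_isomorphism f (star_V k) (star_E k) (insert v S) ((\<lambda>u. {v, u}) ` S)"
    using star_graph_isomorphism[OF S(3,2) _ k] by blast
  moreover have "insert v S \<subseteq> V" "(\<lambda>u. {v, u}) ` S \<subseteq> E"
    using S(1) v unfolding neighbours_def by (auto simp: insert_commute)
  moreover have "is_graph (insert v S) ((\<lambda>u. {v, u}) ` S)"
    using S(3) \<open>v \<notin> S\<close> unfolding is_graph_def by (auto simp: card_2_iff)
  ultimately have "(insert v S, (\<lambda>u. {v, u}) ` S) \<in> copies (star_V k) (star_E k) V E"
    unfolding copies_def graph_iso_iff_graph_isomorphism by blast
  then show ?thesis by blast
qed

lemma degree_ge_if_star_copy:
  assumes G: "is_graph V E" and k: "k \<ge> 1"
    and C: "(V', E') \<in> copies (star_V k) (star_E k) V E"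
  shows "\<exists>v\<in>V. k - 1 \<le> degree V E v"
proof -
  obtain f where sub: "V' \<subseteq> V" "E' \<subseteq> E"
    and f: "graph_isomorphism f (star_V k) (star_E k) V' E'"
    using C unfolding copies_def graph_iso_iff_graph_isomorphism by blast
  have center: "0 \<in> star_V k" using k unfolding star_V_def by simp
  then have "f 0 \<in> V"
    using f sub unfolding graph_isomorphism_def by (auto dest: bij_betwE)
  moreover have "k - 1 = degree V' E' (f 0)"
    using graph_isomorphism_degree[OF f center] degree_star_center k by simp
  moreover have "degree V' E' (f 0) \<le> degree V E (f 0)"
    using G sub unfolding is_graph_def by (intro degree_mono) auto
  ultimately show ?thesis by auto
qed

lemma star_free_iff_max_degree:
  assumes G: "is_graph V E" and k: "k \<ge> 2"
  shows "F_free (star_V k) (star_E k) V E \<longleftrightarrow> (\<forall>v\<in>V. degree V E v \<le> k - 2)"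
proof -
  have "copies (star_V k) (star_E k) V E \<noteq> {} \<longleftrightarrow> (\<exists>v\<in>V. k - 1 \<le> degree V E v)"
  proof
    assume "copies (star_V k) (star_E k) V E \<noteq> {}"
    then obtain V' E' where "(V', E') \<in> copies (star_V k) (star_E k) V E" by auto
    then show "\<exists>v\<in>V. k - 1 \<le> degree V E v" using degree_ge_if_star_copy[OF G] k by simp
  next
    assume "\<exists>v\<in>V. k - 1 \<le> degree V E v"
    then show "copies (star_V k) (star_E k) V E \<noteq> {}" using star_copy_if_degree_ge[OF G] k by auto
  qed
  then have "F_free (star_V k) (star_E k) V E \<longleftrightarrow> \<not> (\<exists>v\<in>V. k - 1 \<le> degree V E v)"
    using F_free_iff_copies_empty[OF G] by blast
  also have "\<dots> \<longleftrightarrow> (\<forall>v\<in>V. degree V E v \<le> k - 2)" using k by auto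
  finally show ?thesis .
qed

section \<open>Copies of a connected regular graph in a host of bounded degree\<close>

context
  fixes V :: "'b set" and E :: "'b set set" and VH :: "'a set" and EH :: "'a set set" and d :: nat
  assumes G: "is_graph V E" and max_degree: "\<forall>v\<in>V. degree V E v \<le> d"
    and regular: "regular d VH EH"
begin

lemma copy_contains_incident_edges:
  assumes C: "(V', E') \<in> copies VH EH V E" and x: "x \<in> V'" and e: "{x, y} \<in> E"
  shows "{x, y} \<in> E'"
proof -
  obtain f where sub: "V' \<subseteq> V" "E' \<subseteq> E" and f: "graph_isomorphism f VH EH V' E'"
    using C unfolding copies_def graph_iso_iff_graph_isomorphism by blast
  obtain w where w: "w \<in> VH" "x = f w"
    using f x unfolding graph_isomorphism_def bij_betw_def by auto
  have "degree V' E' x = d"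
    using graph_isomorphism_degree[OF f w(1)] regular w unfolding regular_def by simp
  moreover have "degree V E x \<le> d" using max_degree sub x by blast
  moreover have "finite V" using G unfolding is_graph_def by simp
  ultimately have "neighbours V' E' x = neighbours V E x"
    using neighbours_subgraph_eq[OF _ sub] by simp
  moreover have "y \<in> neighbours V E x"
    using e is_graph_edgeD[OF G e] unfolding neighbours_def by (simp add: insert_commute)
  ultimately have "{y, x} \<in> E'" unfolding neighbours_def by blast
  then show ?thesis by (simp add: insert_commute)
qed

lemma copy_edges_eq:
  assumes C: "(V', E') \<in> copies VH EH V E"
  shows "E' = {e\<in>E. e \<subseteq> V'}"
proof
  have "E' \<subseteq> E" and "is_graph V' E'" using C unfolding copies_def by simp_all
  then show "E' \<subseteq> {e\<in>E. e \<subseteq> V'}" unfolding is_graph_def by blast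
  show "{e\<in>E. e \<subseteq> V'} \<subseteq> E'"
  proof
    fix e assume e: "e \<in> {e\<in>E. e \<subseteq> V'}"
    then obtain x y where "e = {x, y}"
      using G is_graph_edge_doubleton by blast
    with e show "e \<in> E'" using copy_contains_incident_edges[OF C, of x y] by simp
  qed
qed

lemma copy_vertices_eq_component:
  assumes H: "is_graph VH EH" "connected_graph VH EH"
    and C: "(V', E') \<in> copies VH EH V E" and z: "z \<in> V'"
  shows "V' = {u. (\<lambda>x y. {x, y} \<in> E)\<^sup>*\<^sup>* z u}"
proof -
  obtain f where sub: "E' \<subseteq> E" and G': "is_graph V' E'"
    and f: "graph_isomorphism f VH EH V' E'"
    using C unfolding copies_def graph_iso_iff_graph_isomorphism by blast
  have "u \<in> V'" if "(\<lambda>x y. {x, y} \<in> E)\<^sup>*\<^sup>* z u" for u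
    using that
  proof (induction rule: rtranclp_induct)
    case (step a b)
    then have "{a, b} \<in> E'" using copy_contains_incident_edges[OF C] by blast
    then show ?case using is_graph_edgeD(2)[OF G'] by blast
  qed (rule z)
  moreover have "(\<lambda>x y. {x, y} \<in> E)\<^sup>*\<^sup>* z u" if "u \<in> V'" for u
  proof -
    have "(\<lambda>x y. {x, y} \<in> E')\<^sup>*\<^sup>* z u"
      using graph_isomorphism_connected_graph[OF H(1) f H(2)] z that
      unfolding connected_graph_def by blast
    then show ?thesis
      by (rule rtranclp_mono[THEN predicate2D, rotated]) (use sub in blast)
  qed
  ultimately show ?thesis by blast
qed

lemma count_copies_mult_card_le:
  assumes H: "is_graph VH EH" "connected_graph VH EH"
  shows "count_copies VH EH V E * card VH \<le> card V"
proof -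
  let ?C = "copies VH EH V E"
  have inj: "inj_on fst ?C"
  proof (rule inj_onI)
    fix p q assume p: "p \<in> ?C" and q: "q \<in> ?C" and "fst p = fst q"
    moreover have "snd p = {e\<in>E. e \<subseteq> fst p}" "snd q = {e\<in>E. e \<subseteq> fst q}"
      using copy_edges_eq p q by simp_all
    ultimately show "p = q" by (simp add: prod_eq_iff)
  qed
  have disjoint: "pairwise disjnt (fst ` ?C)"
  proof (rule pairwiseI)
    fix A B assume A: "A \<in> fst ` ?C" and B: "B \<in> fst ` ?C" and "A \<noteq> B"
    obtain EA EB where CA: "(A, EA) \<in> ?C" and CB: "(B, EB) \<in> ?C"
      using A B by auto
    have "A = B" if "z \<in> A" "z \<in> B" for z
      using copy_vertices_eq_component[OF H CA that(1)]
        copy_vertices_eq_component[OF H CB that(2)] by simp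
    with \<open>A \<noteq> B\<close> show "disjnt A B" unfolding disjnt_def by blast
  qed
  have card_copy: "card A = card VH" if A: "A \<in> fst ` ?C" for A
  proof -
    obtain EA where "graph_iso VH EH A EA"
      using A unfolding copies_def by auto
    then show ?thesis unfolding graph_iso_def by (auto dest: bij_betw_same_card)
  qed
  have sub: "\<Union>(fst ` ?C) \<subseteq> V" unfolding copies_def by auto
  have finV: "finite V" using G unfolding is_graph_def by simp
  have "count_copies VH EH V E * card VH = card (fst ` ?C) * card VH"
    by (simp add: count_copies_eq_card_copies card_image[OF inj])
  also have "\<dots> = card (\<Union>(fst ` ?C))"
  proof -
    have "finite A" if "A \<in> fst ` ?C" for A
      using that sub finV by (meson Sup_upper finite_subset)
    then show ?thesis using card_Union_disjoint[OF disjoint] card_copy by simp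
  qed
  also have "\<dots> \<le> card V" using card_mono[OF finV sub] .
  finally show ?thesis .
qed

end

section \<open>Disjoint unions of copies\<close>

lemma is_graph_image:
  assumes "is_graph V E" and "inj_on f V"
  shows "is_graph (f ` V) ((`) f ` E)"
proof -
  have "card (f ` e) = 2" if "e \<in> E" for e
    using that assms unfolding is_graph_def by (metis card_image inj_on_subset)
  then show ?thesis using assms(1) unfolding is_graph_def by auto
qed

lemma graph_isomorphism_image:
  assumes "is_graph V E" and "inj_on f V"
  shows "graph_isomorphism f V E (f ` V) ((`) f ` E)"
proof -
  have "{x, y} \<in> E \<longleftrightarrow> f ` {x, y} \<in> (`) f ` E" if "x \<in> V" "y \<in> V" for x y
    using inj_on_image_Pow[OF assms(2)] that assms(1) unfolding is_graph_def
    by (intro inj_on_image_mem_iff[symmetric]) auto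
  then show ?thesis
    using assms(2) unfolding graph_isomorphism_def by (simp add: inj_on_imp_bij_betw)
qed

lemma is_graph_UN:
  assumes "finite W" and "\<forall>i\<in>I. is_graph (B i) (F i) \<and> B i \<subseteq> W"
  shows "is_graph W (\<Union>i\<in>I. F i)"
  using assms unfolding is_graph_def by blast

lemma degree_UN_disjoint_le:
  assumes graphs: "\<forall>i\<in>I. is_graph (B i) (F i)"
    and degrees: "\<forall>i\<in>I. \<forall>v\<in>B i. degree (B i) (F i) v \<le> d"
    and disjoint: "disjoint_family_on B I"
  shows "degree W (\<Union>i\<in>I. F i) v \<le> d"
proof (cases "\<exists>i\<in>I. v \<in> B i")
  case True
  then obtain i where i: "i \<in> I" "v \<in> B i" by blast
  have "neighbours W (\<Union>i\<in>I. F i) v \<subseteq> neighbours (B i) (F i) v"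
  proof
    fix u assume "u \<in> neighbours W (\<Union>i\<in>I. F i) v"
    then obtain j where j: "j \<in> I" "{u, v} \<in> F j" unfolding neighbours_def by blast
    then have "u \<in> B j" "v \<in> B j" using graphs is_graph_edgeD by metis+
    then have "j = i" using disjoint i j(1) unfolding disjoint_family_on_def by blast
    with j \<open>u \<in> B j\<close> show "u \<in> neighbours (B i) (F i) v" unfolding neighbours_def by simp
  qed
  then have "degree W (\<Union>i\<in>I. F i) v \<le> degree (B i) (F i) v"
    unfolding degree_eq_card_neighbours using graphs i(1)
    by (intro card_mono) (auto simp: finite_neighbours)
  also have "\<dots> \<le> d" using degrees i by blast
  finally show ?thesis .
next
  case False
  have "{u, v} \<notin> F i" if "i \<in> I" for u i
    using False graphs that by (metis is_graph_edgeD(2))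
  then have "neighbours W (\<Union>i\<in>I. F i) v = {}" unfolding neighbours_def by blast
  then show ?thesis by (simp add: degree_eq_card_neighbours)
qed

lemma inj_on_slice:
  assumes "inj_on g (I \<times> V)" and "i \<in> I"
  shows "inj_on (\<lambda>x. g (i, x)) V"
  using assms by (auto intro: inj_onI dest: inj_onD)

lemma disjoint_family_on_slices:
  assumes "inj_on g (I \<times> V)"
  shows "disjoint_family_on (\<lambda>i. (\<lambda>x. g (i, x)) ` V) I"
  using assms unfolding disjoint_family_on_def by (auto dest: inj_onD)

lemma inj_on_disjoint_family_nonempty:
  assumes "disjoint_family_on B I" and "\<forall>i\<in>I. B i \<noteq> {}"
  shows "inj_on B I"
proof (rule inj_onI)
  fix i j assume "i \<in> I" "j \<in> I" "B i = B j"
  then show "i = j" using assms(2) disjoint_family_onD[OF assms(1)] by force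
qed

lemma exists_graph_with_disjoint_copies:
  assumes W: "finite W" and H: "is_graph VH EH" "VH \<noteq> {}" and regular: "regular d VH EH"
    and q: "q * card VH \<le> card W"
  shows "\<exists>E. is_graph W E \<and> (\<forall>v\<in>W. degree W E v \<le> d) \<and> q \<le> count_copies VH EH W E"
proof -
  have "finite VH" using H(1) unfolding is_graph_def by simp
  then obtain g where g: "g ` ({..<q} \<times> VH) \<subseteq> W" "inj_on g ({..<q} \<times> VH)"
    using card_le_inj[of "{..<q} \<times> VH" W] W q by (auto simp: card_cartesian_product)
  define B where "B i = (\<lambda>x. g (i, x)) ` VH" for i
  define F where "F i = (`) (\<lambda>x. g (i, x)) ` EH" for i
  define E where "E = (\<Union>i<q. F i)"
  have graphs: "is_graph (B i) (F i)" and iso: "graph_isomorphism (\<lambda>x. g (i, x)) VH EH (B i) (F i)"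
    if "i < q" for i
    unfolding B_def F_def using is_graph_image graph_isomorphism_image H(1)
      inj_on_slice[OF g(2)] that by blast+
  have blocks: "B i \<subseteq> W" if "i < q" for i using g(1) that unfolding B_def by auto
  have graph: "is_graph W E"
    unfolding E_def by (rule is_graph_UN) (use W graphs blocks in auto)
  have disjoint: "disjoint_family_on B {..<q}"
    unfolding B_def by (rule disjoint_family_on_slices[OF g(2)])
  have "degree (B i) (F i) v \<le> d" if "i < q" "v \<in> B i" for i v
    using that graph_isomorphism_degree[OF iso] regular
    unfolding regular_def B_def by auto
  then have degree: "\<forall>v\<in>W. degree W E v \<le> d"
    unfolding E_def using degree_UN_disjoint_le[OF _ _ disjoint] graphs by blast
  have "(B i, F i) \<in> copies VH EH W E" if "i < q" for i
    using graphs iso that blocks unfolding copies_def E_def graph_iso_iff_graph_isomorphism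
    by auto
  then have "(\<lambda>i. (B i, F i)) ` {..<q} \<subseteq> copies VH EH W E" by auto
  moreover have "inj_on (\<lambda>i. (B i, F i)) {..<q}"
    using inj_on_disjoint_family_nonempty[OF disjoint] H(2) unfolding B_def inj_on_def
    by simp
  ultimately have "card {..<q} \<le> count_copies VH EH W E"
    unfolding count_copies_eq_card_copies
    by (intro card_inj_on_le finite_copies[OF graph])
  with graph degree show ?thesis by auto
qed

lemma count_copies_le_if_star_free:
  assumes G: "is_graph V E" and free: "F_free (star_V k) (star_E k) V E" and k: "k \<ge> 2"
    and H: "is_graph VH EH" "connected_graph VH EH" and regular: "regular (k - 2) VH EH"
  shows "count_copies VH EH V E \<le> card V div card VH"
proof -
  have "card VH > 0"
    using H unfolding is_graph_def connected_graph_def by (simp add: card_gt_0_iff)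
  moreover have "\<forall>v\<in>V. degree V E v \<le> k - 2"
    using star_free_iff_max_degree[OF G k] free by blast
  then have "count_copies VH EH V E * card VH \<le> card V"
    using count_copies_mult_card_le[OF G _ regular H] by blast
  ultimately show ?thesis by (simp add: less_eq_div_iff_mult_less_eq)
qed

lemma exists_star_free_graph_with_copies:
  assumes W: "finite W" and k: "k \<ge> 2"
    and H: "is_graph VH EH" "VH \<noteq> {}" and regular: "regular (k - 2) VH EH"
  shows "\<exists>E. is_graph W E \<and> F_free (star_V k) (star_E k) W E \<and>
    card W div card VH \<le> count_copies VH EH W E"
proof -
  obtain E where "is_graph W E" "\<forall>v\<in>W. degree W E v \<le> k - 2"
    and "card W div card VH \<le> count_copies VH EH W E"
    using exists_graph_with_disjoint_copies[OF W H regular, of "card W div card VH"] by auto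
  then show ?thesis using star_free_iff_max_degree k by blast
qed

theorem mainTheorem18:
  fixes VH :: "'a set" and EH :: "'a set set" and k n :: nat
  assumes "k \<ge> 2"
    and "is_graph VH EH" and "connected_graph VH EH" and "regular (k - 2) VH EH"
    and "n > 0"
  shows "ex_gen n VH EH (star_V k) (star_E k) = n div card VH"
proof -
  define counts where "counts = {count_copies VH EH {0..<n} E | E.
       is_graph {0..<n} E \<and> F_free (star_V k) (star_E k) {0..<n} E}"
  have upper: "\<forall>c\<in>counts. c \<le> n div card VH"
    unfolding counts_def using count_copies_le_if_star_free assms(1-4) by fastforce
  have "VH \<noteq> {}" using assms(3) unfolding connected_graph_def by simp
  then obtain E where "is_graph {0..<n} E" "F_free (star_V k) (star_E k) {0..<n} E"
    and lower: "n div card VH \<le> count_copies VH EH {0..<n} E"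
    using exists_star_free_graph_with_copies[of "{0..<n}"] assms(1,2,4) by fastforce
  then have "count_copies VH EH {0..<n} E \<in> counts" unfolding counts_def by blast
  with upper lower have "n div card VH \<in> counts" by (metis le_antisym)
  moreover have "finite counts"
    using upper by (meson finite_atMost atMost_iff finite_subset subsetI)
  ultimately have "Max counts = n div card VH" using upper by (intro Max_eqI) auto
  then show ?thesis unfolding ex_gen_def counts_def .
qed

end
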